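(* Let $T\in\mathcal{B}(\mathcal{H})$ be a self-adjoint operator which is the pencil of a pair of projections at $\lambda\in\mathbb{R}$ and the pencil of a pair of projections at $\mu\in\mathbb{R}$. If one of $\lambda$ and $\mu$ is zero, then the other belongs to $\{-1,0,1\}$.
   Context: $\mathcal{H}$ is an infinite-dimensional complex Hilbert space; "projection" means orthogonal projection. For $\lambda\in\mathbb{R}$, $T$ is the pencil of a pair of projections at $\lambda$ if $T=\lambda P+Q$ for some nonzero projections $P,Q\in\mathcal{B}(\mathcal{H})$. *)

theory Defs
  imports "HOL-Analysis.Analysis"
begin

class complex_hilbert = ab_group_add +
  fixes cscale :: "complex \<Rightarrow> 'a \<Rightarrow> 'a"
    and cinner :: "'a \<Rightarrow> 'a \<Rightarrow> complex"
  assumes cscale_add_right: "cscale a (x + y) = cscale a x + cscale a y"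
    and cscale_add_left: "cscale (a + b) x = cscale a x + cscale b x"
    and cscale_cscale: "cscale a (cscale b x) = cscale (a * b) x"
    and cscale_one: "cscale 1 x = x"
    and cinner_cnj_commute: "cinner x y = cnj (cinner y x)"
    and cinner_add_left: "cinner (x + y) z = cinner x z + cinner y z"
    and cinner_cscale_left: "cinner (cscale a x) y = cnj a * cinner x y"
    and cinner_nonneg: "0 \<le> Re (cinner x x)"
    and cinner_eq_zero: "cinner x x = 0 \<Longrightarrow> x = 0"
    and complete:
      "(\<forall>e>0. \<exists>N. \<forall>m\<ge>N. \<forall>n\<ge>N. sqrt (Re (cinner (X m - X n) (X m - X n))) < e)
        \<Longrightarrow> \<exists>L. (\<lambda>n. sqrt (Re (cinner (X n - L) (X n - L)))) \<longlonglongrightarrow> 0"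

definition hnorm :: "'a::complex_hilbert \<Rightarrow> real" where
  "hnorm x = sqrt (Re (cinner x x))"

definition finite_dimensional :: "'a::complex_hilbert itself \<Rightarrow> bool" where
  "finite_dimensional _ \<longleftrightarrow>
     (\<exists>S::'a set. finite S \<and> (\<forall>x. \<exists>c. x = (\<Sum>s\<in>S. cscale (c s) s)))"

definition bounded_op :: "('a::complex_hilbert \<Rightarrow> 'a) \<Rightarrow> bool" where
  "bounded_op T \<longleftrightarrow>
     (\<forall>x y. T (x + y) = T x + T y) \<and> (\<forall>a x. T (cscale a x) = cscale a (T x)) \<and>
     (\<exists>K. \<forall>x. hnorm (T x) \<le> K * hnorm x)"

definition self_adjoint :: "('a::complex_hilbert \<Rightarrow> 'a) \<Rightarrow> bool" where
  "self_adjoint T \<longleftrightarrow> (\<forall>x y. cinner (T x) y = cinner x (T y))"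

definition projection :: "('a::complex_hilbert \<Rightarrow> 'a) \<Rightarrow> bool" where
  "projection P \<longleftrightarrow> bounded_op P \<and> P \<circ> P = P \<and> self_adjoint P"

definition pencil_at :: "('a::complex_hilbert \<Rightarrow> 'a) \<Rightarrow> real \<Rightarrow> bool" where
  "pencil_at T l \<longleftrightarrow>
     (\<exists>P Q. projection P \<and> projection Q \<and> P \<noteq> (\<lambda>_. 0) \<and> Q \<noteq> (\<lambda>_. 0) \<and>
            T = (\<lambda>x. cscale (complex_of_real l) (P x) + Q x))"

end

theory Submission
  imports Defs
begin

text \<open>If \<open>T = Q\<^sub>0\<close> is a pencil at \<open>0\<close> then \<open>T\<close> is idempotent. Writing also \<open>T = c P + Q\<close> with
\<open>c \<noteq> 0\<close>, expanding \<open>T\<^sup>2 = T\<close> gives \<open>PQ + QP = (1 - c) P\<close>; compressing by \<open>P\<close> yields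
\<open>PQ = d P\<close> with \<open>d = (1 - c)/2\<close>, and then \<open>Q\<^sup>2 = Q\<close> forces \<open>d\<^sup>2 = d\<close>, i.e. \<open>c = \<plusminus>1\<close>.\<close>

context vector_space
begin

lemma anticommutator_of_idempotent_pencil:
  assumes P: "Vector_Spaces.linear scale scale P" and Q: "Vector_Spaces.linear scale scale Q"
    and PP: "P \<circ> P = P" and QQ: "Q \<circ> Q = Q"
    and T: "T = (\<lambda>x. scale c (P x) + Q x)" and TT: "T \<circ> T = T" and "c \<noteq> 0"
  shows "P (Q x) + Q (P x) = scale (1 - c) (P x)"
proof -
  interpret P: Vector_Spaces.linear scale scale P by (fact P)
  interpret Q: Vector_Spaces.linear scale scale Q by (fact Q)
  have "scale c (scale c (P x) + P (Q x) + Q (P x)) = scale c (P x)"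
    using fun_cong[OF TT, of x] fun_cong[OF PP, of x] fun_cong[OF QQ, of x]
    by (simp add: T P.add Q.add P.scale Q.scale scale_right_distrib algebra_simps)
  then have "scale c (P x) + P (Q x) + Q (P x) = P x"
    using \<open>c \<noteq> 0\<close> by (simp add: scale_left_imp_eq)
  then show ?thesis
    by (simp add: scale_left_diff_distrib algebra_simps)
qed

lemma compression_of_anticommutator:
  assumes P: "Vector_Spaces.linear scale scale P" and PP: "P \<circ> P = P"
    and anti: "\<And>x. P (Q x) + Q (P x) = scale e (P x)" and two: "(2::'a) \<noteq> 0"
  shows "P (Q x) = scale (e / 2) (P x)"
proof -
  interpret P: Vector_Spaces.linear scale scale P by (fact P)
  have PQ_PQP: "P (Q y) + P (Q (P y)) = scale e (P y)" for y
    using arg_cong[OF anti[of y], of P] fun_cong[OF PP]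
    by (simp add: P.add P.scale)
  have "scale 2 (P (Q (P y))) = scale e (P y)" for y
  proof -
    have "scale 2 (P (Q (P y))) = scale (1 + 1) (P (Q (P y)))"
      by simp
    also have "\<dots> = scale e (P y)"
      using PQ_PQP[of "P y"] fun_cong[OF PP, of y] by (simp only: scale_left_distrib scale_one o_apply)
    finally show ?thesis .
  qed
  then have PQP: "P (Q (P y)) = scale (e / 2) (P y)" for y
    using two by (metis scale_scale scale_one divide_inverse mult.commute right_inverse)
  have "P (Q x) = scale e (P x) - scale (e / 2) (P x)"
    using PQ_PQP[of x] PQP[of x] by (simp add: algebra_simps)
  also have "\<dots> = scale (e / 2) (P x)"
    using two by (simp add: scale_left_diff_distrib[symmetric] field_simps)
  finally show ?thesis .
qed

lemma scalar_compression_idempotent: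
  assumes P: "Vector_Spaces.linear scale scale P" and QQ: "Q \<circ> Q = Q"
    and PQ: "\<And>x. P (Q x) = scale d (P x)" and "P z \<noteq> 0"
  shows "d = 0 \<or> d = 1"
proof -
  have "scale (d * d) (P z) = scale d (P z)"
    using PQ[of "Q z"] PQ[of z] fun_cong[OF QQ, of z] by simp
  then have "d * d = d"
    using \<open>P z \<noteq> 0\<close> by (metis scale_right_imp_eq)
  then show ?thesis
    by (metis mult_cancel_right2 mult_eq_0_iff)
qed

lemma idempotent_pencil_coefficient:
  assumes P: "Vector_Spaces.linear scale scale P" and Q: "Vector_Spaces.linear scale scale Q"
    and PP: "P \<circ> P = P" and QQ: "Q \<circ> Q = Q" and "P \<noteq> (\<lambda>_. 0)"
    and "T = (\<lambda>x. scale c (P x) + Q x)" and "T \<circ> T = T" and "c \<noteq> 0"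
    and two: "(2::'a) \<noteq> 0"
  shows "c = 1 \<or> c = -1"
proof -
  obtain z where "P z \<noteq> 0"
    using \<open>P \<noteq> (\<lambda>_. 0)\<close> by auto
  have "P (Q x) = scale ((1 - c) / 2) (P x)" for x
    using compression_of_anticommutator[OF P PP _ two]
      anticommutator_of_idempotent_pencil[OF assms(1-4,6-8)] by blast
  then have "(1 - c) / 2 = 0 \<or> (1 - c) / 2 = 1"
    using scalar_compression_idempotent[OF P QQ] \<open>P z \<noteq> 0\<close> by blast
  then show ?thesis
    using two by (auto simp: field_simps add_eq_0_iff)
qed

end

interpretation cv: vector_space "cscale :: complex \<Rightarrow> 'a::complex_hilbert \<Rightarrow> 'a"
  by unfold_locales (simp_all add: cscale_add_right cscale_add_left cscale_cscale cscale_one)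

lemma projection_linear: "projection P \<Longrightarrow> Vector_Spaces.linear cscale cscale P"
  unfolding projection_def bounded_op_def
  by (simp add: linear_iff_module_hom module_hom_def module_hom_axioms_def cv.module_axioms)

lemma projection_idem: "projection P \<Longrightarrow> P \<circ> P = P"
  unfolding projection_def by simp

lemma pencil_at_zero_idem: "pencil_at T 0 \<Longrightarrow> T \<circ> T = T"
  unfolding pencil_at_def using projection_idem by fastforce

lemma idempotent_pencil_at:
  fixes T :: "'a::complex_hilbert \<Rightarrow> 'a"
  assumes "pencil_at T r" and "T \<circ> T = T"
  shows "r \<in> {-1, 0, 1}"
proof (cases "r = 0")
  case False
  from \<open>pencil_at T r\<close> obtain P Q where P: "projection P" and Q: "projection Q"
    and "P \<noteq> (\<lambda>_. 0)" and "T = (\<lambda>x. cscale (complex_of_real r) (P x) + Q x)"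
    unfolding pencil_at_def by blast
  with \<open>T \<circ> T = T\<close> False have "complex_of_real r = 1 \<or> complex_of_real r = -1"
    by (intro cv.idempotent_pencil_coefficient[OF projection_linear[OF P] projection_linear[OF Q]
        projection_idem[OF P] projection_idem[OF Q]]) simp_all
  then show ?thesis
    by (metis insertCI of_real_1 of_real_eq_iff of_real_minus)
qed simp

theorem proposition3p1:
  fixes T :: "'a::complex_hilbert \<Rightarrow> 'a" and l m :: real
  assumes "\<not> finite_dimensional TYPE('a)"
    and "bounded_op T" and "self_adjoint T"
    and "pencil_at T l" and "pencil_at T m"
    and "l = 0 \<or> m = 0"
  shows "(l = 0 \<longrightarrow> m \<in> {-1, 0, 1}) \<and> (m = 0 \<longrightarrow> l \<in> {-1, 0, 1})"
  using assms(4,5) pencil_at_zero_idem idempotent_pencil_at by blast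

end
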